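(* Let $l(y_p,y)$ be a loss function differentiable in $y$, and let $g_l^*=\max_{y_p\in[-1,1]}\left|\frac{\partial l(y_p,y)}{\partial y}\big|_{y=0}\right|$ (assumed finite). Let $\lambda>0$. Suppose gradient-based data filtering is applied, i.e. only instances with gradient $|g_i|\le g_l^*$ are used. Then the sensitivity of the split gain $G(I_L,I_R)=\frac{(\sum_{i\in I_L}g_i)^2}{|I_L|+\lambda}+\frac{(\sum_{i\in I_R}g_i)^2}{|I_R|+\lambda}$ satisfies $\Delta G\le 3{g_l^*}^2$, and the sensitivity of the leaf value $V(I)=-\frac{\sum_{i\in I}g_i}{|I|+\lambda}$ satisfies $\Delta V\le \frac{g_l^*}{1+\lambda}$.
   Context: Gradient-based data filtering (GDF): at each boosting iteration, every training instance whose gradient $g_i$ satisfies $|g_i|>g_l^*$ is discarded for that iteration, so that all instances entering the computations of $G$ and $V$ have $|g_i|\le g_l^*$. Sensitivities are taken over neighboring inputs: for $G$, split configurations $(I_L,I_R)$ and one obtained by adding one instance to $I_L$ or to $I_R$; for $V$, instance sets $I$ and $I\cup\{s\}$. *)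

theory Defs
  imports "HOL-Analysis.Analysis"
begin

text \<open>Gradient bound: g_l^* = max over y_p in [-1,1] of the absolute derivative
  of l(y_p, y) with respect to y, evaluated at y = 0 (written as a supremum;
  finiteness is assumed separately).\<close>
definition gstar :: "(real \<Rightarrow> real \<Rightarrow> real) \<Rightarrow> real" where
  "gstar l = (SUP yp\<in>{-1..1}. \<bar>deriv (l yp) 0\<bar>)"

definition split_gain :: "('a \<Rightarrow> real) \<Rightarrow> real \<Rightarrow> 'a set \<Rightarrow> 'a set \<Rightarrow> real" where
  "split_gain g lam IL IR =
     (\<Sum>i\<in>IL. g i)\<^sup>2 / (real (card IL) + lam) + (\<Sum>i\<in>IR. g i)\<^sup>2 / (real (card IR) + lam)"

definition leaf_value :: "('a \<Rightarrow> real) \<Rightarrow> real \<Rightarrow> 'a set \<Rightarrow> real" where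
  "leaf_value g lam I = - (\<Sum>i\<in>I. g i) / (real (card I) + lam)"

end

theory Submission
  imports Defs
begin

text \<open>Only the filtering bound \<open>\<bar>g i\<bar> \<le> c\<close> matters, for an arbitrary threshold \<open>c\<close>; the
  hypotheses on the loss \<open>l\<close> merely make \<open>c = g\<^sub>l\<^sup>*\<close> meaningful. Let \<open>I\<close> have \<open>n\<close> elements and
  gradient sum \<open>S\<close>, so \<open>\<bar>S\<bar> \<le> n c\<close>, put \<open>m = n + \<lambda>\<close> and add an instance with gradient \<open>x\<close>.
  A gain term \<open>S\<^sup>2/m\<close> changes by \<open>2Sx/(m+1) + x\<^sup>2/(m+1) - S\<^sup>2/(m(m+1))\<close>: the first summand
  is at most \<open>2c\<^sup>2\<close> in absolute value and the other two lie in \<open>[0, c\<^sup>2]\<close>. The leaf value changes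
  by \<open>(S - m x)/(m(m+1))\<close>, which is at most \<open>c(2n+\<lambda>)/(m(m+1)) \<le> c/(1+\<lambda>)\<close> because \<open>n \<le> n\<^sup>2\<close>.\<close>

lemma abs_sum_le_card_mult:
  fixes g :: "'a \<Rightarrow> real"
  assumes "\<forall>i\<in>I. \<bar>g i\<bar> \<le> c"
  shows "\<bar>\<Sum>i\<in>I. g i\<bar> \<le> real (card I) * c"
proof -
  have "\<bar>\<Sum>i\<in>I. g i\<bar> \<le> (\<Sum>i\<in>I. \<bar>g i\<bar>)" by (rule sum_abs)
  also have "\<dots> \<le> real (card I) * c" using assms by (intro sum_bounded_above) auto
  finally show ?thesis .
qed

lemma abs_sq_div_succ_diff_le:
  fixes S x c m :: real
  assumes m: "m > 0" and S: "\<bar>S\<bar> \<le> m * c" and x: "\<bar>x\<bar> \<le> c"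
  shows "\<bar>(S + x)\<^sup>2 / (m + 1) - S\<^sup>2 / m\<bar> \<le> 3 * c\<^sup>2"
proof -
  have c: "c \<ge> 0" using x by linarith
  have expand: "(S + x)\<^sup>2 / (m + 1) - S\<^sup>2 / m
      = 2 * (S * x) / (m + 1) + x\<^sup>2 / (m + 1) - S\<^sup>2 / (m * (m + 1))"
  proof -
    have "m + 1 \<noteq> 0" "m \<noteq> 0" "m * (m + 1) \<noteq> 0" using m by auto
    then show ?thesis by (simp add: divide_simps) (simp add: algebra_simps power2_eq_square)
  qed
  have "\<bar>S * x\<bar> \<le> (m * c) * c"
    unfolding abs_mult using S x by (intro mult_mono) auto
  also have "\<dots> \<le> (m + 1) * c\<^sup>2"
    using c by (simp add: power2_eq_square mult.assoc mult_right_mono)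
  finally have cross: "\<bar>2 * (S * x) / (m + 1)\<bar> \<le> 2 * c\<^sup>2"
    using m by (simp add: abs_mult divide_le_eq ac_simps)
  have "x\<^sup>2 \<le> c\<^sup>2"
    using power_mono[OF x abs_ge_zero, of 2] by simp
  also have "\<dots> \<le> (m + 1) * c\<^sup>2"
    using m by (simp add: mult_le_cancel_right1)
  finally have new: "x\<^sup>2 / (m + 1) \<le> c\<^sup>2"
    using m by (simp add: divide_le_eq mult.commute)
  have "S\<^sup>2 \<le> (m * c)\<^sup>2"
    using power_mono[OF S abs_ge_zero, of 2] by simp
  also have "\<dots> = (m * m) * c\<^sup>2"
    by (simp add: power_mult_distrib power2_eq_square)
  also have "\<dots> \<le> (m * (m + 1)) * c\<^sup>2"
    using m by (intro mult_right_mono mult_left_mono) auto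
  finally have old: "S\<^sup>2 / (m * (m + 1)) \<le> c\<^sup>2"
    using m by (simp add: divide_le_eq mult.commute)
  have "0 \<le> x\<^sup>2 / (m + 1)" "0 \<le> S\<^sup>2 / (m * (m + 1))"
    using m by simp_all
  with cross new old show ?thesis
    unfolding expand by linarith
qed

lemma abs_div_succ_diff_le:
  fixes S x c lam :: real and n :: nat
  assumes lam: "lam > 0" and S: "\<bar>S\<bar> \<le> real n * c" and x: "\<bar>x\<bar> \<le> c"
  shows "\<bar>(S + x) / (real n + 1 + lam) - S / (real n + lam)\<bar> \<le> c / (1 + lam)"
proof -
  define m where "m = real n + lam"
  have m: "m > 0" using lam by (simp add: m_def add_nonneg_pos)
  have c: "c \<ge> 0" using x by linarith
  have "(S + x) / (m + 1) - S / m = (m * x - S) / (m * (m + 1))"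
  proof -
    have "m + 1 \<noteq> 0" "m \<noteq> 0" "m * (m + 1) \<noteq> 0" using m by auto
    then show ?thesis by (simp add: field_simps)
  qed
  moreover have "\<bar>m * x - S\<bar> \<le> (2 * real n + lam) * c"
  proof -
    have "\<bar>m * x\<bar> \<le> m * c" using m x by (simp add: abs_mult)
    then show ?thesis using S by (simp add: m_def algebra_simps)
  qed
  moreover have "(2 * real n + lam) * (1 + lam) \<le> m * (m + 1)"
  proof -
    have "real n \<le> real n * real n" by (cases n) auto
    then show ?thesis by (simp add: m_def algebra_simps)
  qed
  then have "(2 * real n + lam) * c / (m * (m + 1)) \<le> c / (1 + lam)"
    using m lam c by (simp add: divide_simps mult_left_mono mult.commute mult.left_commute)
  ultimately show ?thesis
    using m by (simp add: m_def add.commute add.left_commute abs_divide divide_le_eq)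
qed

lemma sq_sum_div_card_insert_diff_le:
  fixes g :: "'a \<Rightarrow> real"
  assumes I: "finite I" "s \<notin> I" and lam: "lam > 0" and bound: "\<forall>i\<in>insert s I. \<bar>g i\<bar> \<le> c"
  shows "\<bar>(\<Sum>i\<in>insert s I. g i)\<^sup>2 / (real (card (insert s I)) + lam)
           - (\<Sum>i\<in>I. g i)\<^sup>2 / (real (card I) + lam)\<bar> \<le> 3 * c\<^sup>2"
proof -
  have c: "c \<ge> 0" using bound by fastforce
  have "\<bar>\<Sum>i\<in>I. g i\<bar> \<le> real (card I) * c"
    using bound by (intro abs_sum_le_card_mult) auto
  also have "\<dots> \<le> (real (card I) + lam) * c"
    using lam c by (intro mult_right_mono) auto
  finally have "\<bar>((\<Sum>i\<in>I. g i) + g s)\<^sup>2 / (real (card I) + lam + 1)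
                 - (\<Sum>i\<in>I. g i)\<^sup>2 / (real (card I) + lam)\<bar> \<le> 3 * c\<^sup>2"
    using abs_sq_div_succ_diff_le bound lam by (simp add: add_nonneg_pos)
  then show ?thesis using I by (simp add: add.commute add.left_commute)
qed

lemma split_gain_insert_left_diff_le:
  assumes "finite IL" "s \<notin> IL" "lam > 0" "\<forall>i\<in>insert s IL. \<bar>g i\<bar> \<le> c"
  shows "\<bar>split_gain g lam (insert s IL) IR - split_gain g lam IL IR\<bar> \<le> 3 * c\<^sup>2"
  using sq_sum_div_card_insert_diff_le[OF assms] by (simp add: split_gain_def)

lemma split_gain_insert_right_diff_le:
  assumes "finite IR" "s \<notin> IR" "lam > 0" "\<forall>i\<in>insert s IR. \<bar>g i\<bar> \<le> c"
  shows "\<bar>split_gain g lam IL (insert s IR) - split_gain g lam IL IR\<bar> \<le> 3 * c\<^sup>2"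
  using sq_sum_div_card_insert_diff_le[OF assms] by (simp add: split_gain_def)

lemma leaf_value_insert_diff_le:
  assumes I: "finite I" "s \<notin> I" and lam: "lam > 0" and bound: "\<forall>i\<in>insert s I. \<bar>g i\<bar> \<le> c"
  shows "\<bar>leaf_value g lam (insert s I) - leaf_value g lam I\<bar> \<le> c / (1 + lam)"
proof -
  have "\<bar>\<Sum>i\<in>I. g i\<bar> \<le> real (card I) * c"
    using bound by (intro abs_sum_le_card_mult) auto
  then have "\<bar>((\<Sum>i\<in>I. g i) + g s) / (real (card I) + 1 + lam)
              - (\<Sum>i\<in>I. g i) / (real (card I) + lam)\<bar> \<le> c / (1 + lam)"
    using abs_div_succ_diff_le lam bound by simp
  moreover have "leaf_value g lam (insert s I) - leaf_value g lam I
      = - (((\<Sum>i\<in>I. g i) + g s) / (real (card I) + 1 + lam)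
           - (\<Sum>i\<in>I. g i) / (real (card I) + lam))"
    using I by (simp add: leaf_value_def add.commute diff_divide_distrib add_divide_distrib)
  ultimately show ?thesis by simp
qed

theorem corollary1:
  fixes l :: "real \<Rightarrow> real \<Rightarrow> real" and g :: "'a \<Rightarrow> real" and lam :: real
  assumes diff: "\<And>yp y. l yp differentiable (at y)"
    and finite_max: "bdd_above ((\<lambda>yp. \<bar>deriv (l yp) 0\<bar>) ` {-1..1})"
    and lam_pos: "lam > 0"
  defines "D \<equiv> {i. \<bar>g i\<bar> \<le> gstar l}"
  shows
    "(\<forall>IL IR s. finite IL \<and> finite IR \<and> IL \<inter> IR = {} \<and> IL \<subseteq> D \<and> IR \<subseteq> D
        \<and> s \<in> D \<and> s \<notin> IL \<and> s \<notin> IR \<longrightarrow>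
        \<bar>split_gain g lam (insert s IL) IR - split_gain g lam IL IR\<bar> \<le> 3 * (gstar l)\<^sup>2 \<and>
        \<bar>split_gain g lam IL (insert s IR) - split_gain g lam IL IR\<bar> \<le> 3 * (gstar l)\<^sup>2)
     \<and> (\<forall>I s. finite I \<and> I \<subseteq> D \<and> s \<in> D \<and> s \<notin> I \<longrightarrow>
        \<bar>leaf_value g lam (insert s I) - leaf_value g lam I\<bar> \<le> gstar l / (1 + lam))"
proof (intro conjI allI impI; elim conjE)
  fix IL IR s
  assume "finite IL" "finite IR" "IL \<subseteq> D" "IR \<subseteq> D" "s \<in> D" "s \<notin> IL" "s \<notin> IR"
  then show "\<bar>split_gain g lam (insert s IL) IR - split_gain g lam IL IR\<bar> \<le> 3 * (gstar l)\<^sup>2"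
    and "\<bar>split_gain g lam IL (insert s IR) - split_gain g lam IL IR\<bar> \<le> 3 * (gstar l)\<^sup>2"
    using lam_pos
    by (auto intro!: split_gain_insert_left_diff_le split_gain_insert_right_diff_le simp: D_def)
next
  fix I s
  assume "finite I" "I \<subseteq> D" "s \<in> D" "s \<notin> I"
  then show "\<bar>leaf_value g lam (insert s I) - leaf_value g lam I\<bar> \<le> gstar l / (1 + lam)"
    using lam_pos by (auto intro!: leaf_value_insert_diff_le simp: D_def)
qed

end
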